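(* If $\mathscr{F}=(\Omega,\sqsubseteq,\mathcal{E},\mathcal{A},\mathcal{K},\mathcal{B})$ is an epistemic possibility frame, then for any $\omega\in\Omega$, the family $\{E\in\mathcal{E}\mid\omega\in\mathbf{A}(E)\}$ contains $\Omega$ and is closed under $\cap$ and under $\neg$, where $\neg E=\{\omega\in\Omega\mid\forall\omega'\sqsubseteq\omega,\ \omega'\notin E\}$.
   Context: For a poset $(\Omega,\sqsubseteq)$, let $\downarrow E=\{\omega\mid \omega\sqsubseteq\nu\text{ for some }\nu\in E\}$, $\downarrow\nu=\downarrow\{\nu\}$, $\rho(E)=\{\omega\mid \forall\omega'\sqsubseteq\omega\ \exists\omega''\sqsubseteq\omega'\colon \omega''\in\downarrow E\}$; $\mathcal{RO}(\Omega,\sqsubseteq)=\{E\mid\rho(E)=E\}$, a Boolean algebra under $\subseteq$ with meet $\cap$, join $E\sqcup F=\rho(E\cup F)$, complement $\neg E$ as in the claim. $\max(E)=\{\omega\in E\mid\text{no }\nu\in E\text{ with }\omega\sqsubseteq\nu,\ \nu\not\sqsubseteq\omega\}$. A possibility frame $(\Omega,\sqsubseteq,\mathcal{E})$ has $\mathcal{E}\subseteq\mathcal{RO}(\Omega,\sqsubseteq)$ nonempty, closed under binary $\cap$ and $\neg$; quasi-principal means: for all $E\in\mathcal{E}$, $\omega\in E$, $\omega\in\downarrow\max(E)$. A possibility frame with awareness $(\Omega,\sqsubseteq,\mathcal{E},\mathcal{A})$: $(\Omega,\sqsubseteq,\mathcal{E})$ quasi-principal with maximum element $m$; $\mathcal{A}:\Omega\to\wp(\Omega)$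 with, for all $\omega,\omega',\nu$: $m\in\mathcal{A}(\omega)$; $\nu\in\mathcal{A}(\omega)\Rightarrow\downarrow\nu\in\mathcal{E}$; $\omega'\sqsubseteq\omega\Rightarrow\mathcal{A}(\omega)\subseteq\mathcal{A}(\omega')$; $\nu\notin\mathcal{A}(\omega)\Rightarrow\exists\omega'\sqsubseteq\omega\ \forall\omega''\sqsubseteq\omega'\ \nu\notin\mathcal{A}(\omega'')$; if $\nu\in\mathcal{A}(\omega)$, $E,E'\in\mathcal{E}$ and $\max(E\cap\downarrow\nu)\cup\max(E'\cap\downarrow\nu)\subseteq\mathcal{A}(\omega)$ then $\max((E\sqcup E')\cap\downarrow\nu)\subseteq\mathcal{A}(\omega)$; and $\mathcal{E}$ is closed under $\mathbf{A}$, where $\omega\in\mathbf{A}(E)$ iff $\forall\omega'\sqsubseteq\omega\ \forall\nu\in\mathcal{A}(\omega')$: $\max(E\cap\downarrow\nu)\cup\max(\neg E\cap\downarrow\nu)\subseteq\mathcal{A}(\omega')$. An epistemic possibility frame $(\Omega,\sqsubseteq,\mathcal{E},\mathcal{A},\mathcal{K},\mathcal{B})$ adds $\mathcal{K},\mathcal{B}:\Omega\to\wp(\Omega)$ such that for $\mathcal{R}\in\{\mathcal{K},\mathcal{B}\}$: $\omega'\sqsubseteq\omega\Rightarrow\mathcal{R}(\omega')\subseteq\mathcal{R}(\omega)$; $\mathcal{R}(\omega)\in\mathcal{RO}(\Omega,\sqsubseteq)$; $\nu\in\mathcal{R}(\omega)\Rightarrow\exists\omega'\sqsubseteq\omega\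 \forall\omega''\sqsubseteq\omega'\ \exists\nu'\sqsubseteq\nu\colon\nu'\in\mathcal{R}(\omega'')$; $\omega\in\mathcal{K}(\omega)$; $\mathcal{B}(\omega)\neq\varnothing$; $\mathcal{B}(\omega)\subseteq\mathcal{K}(\omega)$; and $\{\omega\mid\mathcal{R}(\omega)\subseteq E\}\in\mathcal{E}$ for $E\in\mathcal{E}$. *)

theory Defs
  imports Main
begin

definition poset :: "'w set \<Rightarrow> ('w \<Rightarrow> 'w \<Rightarrow> bool) \<Rightarrow> bool" where
  "poset Om le \<longleftrightarrow>
     (\<forall>x\<in>Om. le x x) \<and>
     (\<forall>x\<in>Om. \<forall>y\<in>Om. le x y \<and> le y x \<longrightarrow> x = y) \<and>
     (\<forall>x\<in>Om. \<forall>y\<in>Om. \<forall>z\<in>Om. le x y \<and> le y z \<longrightarrow> le x z)"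

definition down :: "'w set \<Rightarrow> ('w \<Rightarrow> 'w \<Rightarrow> bool) \<Rightarrow> 'w set \<Rightarrow> 'w set" where
  "down Om le E = {w\<in>Om. \<exists>v\<in>E. le w v}"

definition rho :: "'w set \<Rightarrow> ('w \<Rightarrow> 'w \<Rightarrow> bool) \<Rightarrow> 'w set \<Rightarrow> 'w set" where
  "rho Om le E = {w\<in>Om. \<forall>w'\<in>Om. le w' w \<longrightarrow> (\<exists>w''\<in>Om. le w'' w' \<and> w'' \<in> down Om le E)}"

definition RO :: "'w set \<Rightarrow> ('w \<Rightarrow> 'w \<Rightarrow> bool) \<Rightarrow> 'w set set" where
  "RO Om le = {E. E \<subseteq> Om \<and> rho Om le E = E}"

definition neg :: "'w set \<Rightarrow> ('w \<Rightarrow> 'w \<Rightarrow> bool) \<Rightarrow> 'w set \<Rightarrow> 'w set" where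
  "neg Om le E = {w\<in>Om. \<forall>w'\<in>Om. le w' w \<longrightarrow> w' \<notin> E}"

definition join :: "'w set \<Rightarrow> ('w \<Rightarrow> 'w \<Rightarrow> bool) \<Rightarrow> 'w set \<Rightarrow> 'w set \<Rightarrow> 'w set" where
  "join Om le E F = rho Om le (E \<union> F)"

definition maxs :: "('w \<Rightarrow> 'w \<Rightarrow> bool) \<Rightarrow> 'w set \<Rightarrow> 'w set" where
  "maxs le E = {w\<in>E. \<not> (\<exists>v\<in>E. le w v \<and> \<not> le v w)}"

definition possibility_frame :: "'w set \<Rightarrow> ('w \<Rightarrow> 'w \<Rightarrow> bool) \<Rightarrow> 'w set set \<Rightarrow> bool" where
  "possibility_frame Om le Ev \<longleftrightarrow>
     poset Om le \<and> Ev \<subseteq> RO Om le \<and> Ev \<noteq> {} \<and>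
     (\<forall>E\<in>Ev. \<forall>F\<in>Ev. E \<inter> F \<in> Ev) \<and>
     (\<forall>E\<in>Ev. neg Om le E \<in> Ev)"

definition quasi_principal :: "'w set \<Rightarrow> ('w \<Rightarrow> 'w \<Rightarrow> bool) \<Rightarrow> 'w set set \<Rightarrow> bool" where
  "quasi_principal Om le Ev \<longleftrightarrow>
     (\<forall>E\<in>Ev. \<forall>w\<in>E. w \<in> down Om le (maxs le E))"

definition Aop :: "'w set \<Rightarrow> ('w \<Rightarrow> 'w \<Rightarrow> bool) \<Rightarrow> ('w \<Rightarrow> 'w set) \<Rightarrow> 'w set \<Rightarrow> 'w set" where
  "Aop Om le A E = {w\<in>Om. \<forall>w'\<in>Om. le w' w \<longrightarrow>
      (\<forall>v\<in>A w'. maxs le (E \<inter> down Om le {v}) \<union> maxs le (neg Om le E \<inter> down Om le {v}) \<subseteq> A w')}"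

definition awareness_frame ::
  "'w set \<Rightarrow> ('w \<Rightarrow> 'w \<Rightarrow> bool) \<Rightarrow> 'w set set \<Rightarrow> ('w \<Rightarrow> 'w set) \<Rightarrow> bool" where
  "awareness_frame Om le Ev A \<longleftrightarrow>
     possibility_frame Om le Ev \<and> quasi_principal Om le Ev \<and>
     (\<exists>m\<in>Om. (\<forall>w\<in>Om. le w m) \<and> (\<forall>w\<in>Om. m \<in> A w)) \<and>
     (\<forall>w\<in>Om. A w \<subseteq> Om) \<and>
     (\<forall>w\<in>Om. \<forall>v\<in>A w. down Om le {v} \<in> Ev) \<and>
     (\<forall>w\<in>Om. \<forall>w'\<in>Om. le w' w \<longrightarrow> A w \<subseteq> A w') \<and>
     (\<forall>w\<in>Om. \<forall>v\<in>Om. v \<notin> A w \<longrightarrow>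
        (\<exists>w'\<in>Om. le w' w \<and> (\<forall>w''\<in>Om. le w'' w' \<longrightarrow> v \<notin> A w''))) \<and>
     (\<forall>w\<in>Om. \<forall>v\<in>A w. \<forall>E\<in>Ev. \<forall>E'\<in>Ev.
        maxs le (E \<inter> down Om le {v}) \<union> maxs le (E' \<inter> down Om le {v}) \<subseteq> A w \<longrightarrow>
        maxs le (join Om le E E' \<inter> down Om le {v}) \<subseteq> A w) \<and>
     (\<forall>E\<in>Ev. Aop Om le A E \<in> Ev)"

definition epistemic_rel :: "'w set \<Rightarrow> ('w \<Rightarrow> 'w \<Rightarrow> bool) \<Rightarrow> 'w set set \<Rightarrow> ('w \<Rightarrow> 'w set) \<Rightarrow> bool" where
  "epistemic_rel Om le Ev R \<longleftrightarrow>
     (\<forall>w\<in>Om. R w \<subseteq> Om) \<and>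
     (\<forall>w\<in>Om. \<forall>w'\<in>Om. le w' w \<longrightarrow> R w' \<subseteq> R w) \<and>
     (\<forall>w\<in>Om. R w \<in> RO Om le) \<and>
     (\<forall>w\<in>Om. \<forall>v\<in>R w. \<exists>w'\<in>Om. le w' w \<and>
        (\<forall>w''\<in>Om. le w'' w' \<longrightarrow> (\<exists>v'\<in>Om. le v' v \<and> v' \<in> R w''))) \<and>
     (\<forall>E\<in>Ev. {w\<in>Om. R w \<subseteq> E} \<in> Ev)"

definition epistemic_frame ::
  "'w set \<Rightarrow> ('w \<Rightarrow> 'w \<Rightarrow> bool) \<Rightarrow> 'w set set \<Rightarrow> ('w \<Rightarrow> 'w set) \<Rightarrow>
   ('w \<Rightarrow> 'w set) \<Rightarrow> ('w \<Rightarrow> 'w set) \<Rightarrow> bool" where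
  "epistemic_frame Om le Ev A K B \<longleftrightarrow>
     awareness_frame Om le Ev A \<and>
     epistemic_rel Om le Ev K \<and> epistemic_rel Om le Ev B \<and>
     (\<forall>w\<in>Om. w \<in> K w) \<and> (\<forall>w\<in>Om. B w \<noteq> {}) \<and> (\<forall>w\<in>Om. B w \<subseteq> K w)"

end

theory Submission
  imports Defs
begin

text \<open>Regular open sets are down-sets and satisfy double negation and De Morgan's law
\<open>\<not>(E \<inter> F) = \<not>E \<squnion> \<not>F\<close>. Double negation makes \<open>\<^bold>A\<close> invariant under \<open>\<not>\<close>, and
\<open>\<Omega> \<in> \<^bold>A\<close> is trivial since \<open>\<not>\<Omega> = \<emptyset>\<close>. For \<open>E \<inter> F\<close>, a maximal point \<open>x\<close> of
\<open>\<not>(E \<inter> F) \<inter> \<down>v\<close> is a maximal point of \<open>(\<not>E \<squnion> \<not>F) \<inter> \<down>v\<close>, covered by the join condition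
on awareness. A maximal point \<open>x\<close> of \<open>E \<inter> F \<inter> \<down>v\<close> lies, by quasi-principality, below
a maximal point \<open>u\<close> of \<open>E \<inter> \<down>v\<close>, of which the agent is aware; since \<open>E\<close> contains
all of \<open>\<down>u\<close>, \<open>x\<close> is a maximal point of \<open>F \<inter> \<down>u\<close>, so awareness of \<open>F\<close> applies.\<close>

lemma RO_down_closed:
  assumes "poset Om le" "E \<in> RO Om le" "x \<in> E" "y \<in> Om" "le y x"
  shows "y \<in> E"
proof -
  have "E \<subseteq> Om" and rho_E: "rho Om le E = E" using assms(2) by (auto simp: RO_def)
  then have "x \<in> rho Om le E" "x \<in> Om" using assms(3) by auto
  then have "y \<in> rho Om le E" using assms(1,4,5) unfolding rho_def poset_def by blast
  then show ?thesis using rho_E by simp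
qed

lemma neg_down_closed:
  assumes "poset Om le" "x \<in> neg Om le E" "y \<in> Om" "le y x"
  shows "y \<in> neg Om le E"
  using assms unfolding neg_def poset_def by blast

lemma neg_neg_RO:
  assumes "poset Om le" "E \<in> RO Om le"
  shows "neg Om le (neg Om le E) = E"
proof -
  have "neg Om le (neg Om le E) = rho Om le E"
  proof (intro set_eqI iffI)
    fix x assume x: "x \<in> neg Om le (neg Om le E)"
    show "x \<in> rho Om le E" unfolding rho_def
    proof (intro CollectI conjI ballI impI)
      show "x \<in> Om" using x by (simp add: neg_def)
      fix x' assume x': "x' \<in> Om" "le x' x"
      then obtain y where "y \<in> Om" "le y x'" "y \<in> E" using x by (auto simp: neg_def)
      then show "\<exists>y\<in>Om. le y x' \<and> y \<in> down Om le E"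
        using assms(1) unfolding down_def poset_def by blast
    qed
  next
    fix x assume x: "x \<in> rho Om le E"
    show "x \<in> neg Om le (neg Om le E)" unfolding neg_def
    proof (intro CollectI conjI ballI impI notI)
      show "x \<in> Om" using x by (simp add: rho_def)
      fix x' assume x': "x' \<in> Om" "le x' x" "x' \<in> {w\<in>Om. \<forall>w'\<in>Om. le w' w \<longrightarrow> w' \<notin> E}"
      then obtain y z where "y \<in> Om" "le y x'" "z \<in> E" "le y z"
        using x by (auto simp: rho_def down_def)
      then show False using x' RO_down_closed[OF assms] by blast
    qed
  qed
  then show ?thesis using assms(2) by (simp add: RO_def)
qed

lemma neg_Int_subset_join:
  assumes "poset Om le" "E \<in> RO Om le"
  shows "neg Om le (E \<inter> F) \<subseteq> join Om le (neg Om le E) (neg Om le F)"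
proof
  have refl: "\<And>a. a \<in> Om \<Longrightarrow> le a a" using assms(1) unfolding poset_def by blast
  have E_neg_Int: "E \<inter> neg Om le (E \<inter> F) \<subseteq> neg Om le F"
    using RO_down_closed[OF assms] unfolding neg_def by blast
  fix x assume x: "x \<in> neg Om le (E \<inter> F)"
  show "x \<in> join Om le (neg Om le E) (neg Om le F)" unfolding join_def rho_def
  proof (intro CollectI conjI ballI impI)
    show "x \<in> Om" using x by (simp add: neg_def)
    fix x' assume x': "x' \<in> Om" "le x' x"
    show "\<exists>y\<in>Om. le y x' \<and> y \<in> down Om le (neg Om le E \<union> neg Om le F)"
    proof (cases "x' \<in> neg Om le E")
      case True
      then show ?thesis using x' refl unfolding down_def by blast
    next
      case False
      then obtain y where y: "y \<in> Om" "le y x'" "y \<in> E" using x' by (auto simp: neg_def)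
      have "x' \<in> neg Om le (E \<inter> F)" using neg_down_closed[OF assms(1) x x'] .
      then have "y \<in> neg Om le F"
        using E_neg_Int neg_down_closed[OF assms(1) _ y(1,2)] y(3) by blast
      then show ?thesis using y refl unfolding down_def by blast
    qed
  qed
qed

lemma join_neg_subset_neg_Int:
  assumes "poset Om le" "E \<in> RO Om le" "F \<in> RO Om le"
  shows "join Om le (neg Om le E) (neg Om le F) \<subseteq> neg Om le (E \<inter> F)"
proof
  fix x assume x: "x \<in> join Om le (neg Om le E) (neg Om le F)"
  show "x \<in> neg Om le (E \<inter> F)" unfolding neg_def
  proof (intro CollectI conjI ballI impI notI)
    show "x \<in> Om" using x by (simp add: join_def rho_def)
    fix x' assume x': "x' \<in> Om" "le x' x" "x' \<in> E \<inter> F"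
    then obtain y z where y: "y \<in> Om" "le y x'" "le y z" "z \<in> neg Om le E \<union> neg Om le F"
      using x by (auto simp: join_def rho_def down_def)
    then have "y \<in> neg Om le E \<union> neg Om le F" using neg_down_closed[OF assms(1)] by blast
    moreover have "y \<in> E \<inter> F" using RO_down_closed[OF assms(1,2)] RO_down_closed[OF assms(1,3)] x' y by blast
    ultimately show False using assms(1) y(1) unfolding neg_def poset_def by blast
  qed
qed

lemma neg_Int_RO:
  assumes "poset Om le" "E \<in> RO Om le" "F \<in> RO Om le"
  shows "neg Om le (E \<inter> F) = join Om le (neg Om le E) (neg Om le F)"
  using neg_Int_subset_join[OF assms(1,2)] join_neg_subset_neg_Int[OF assms] by (rule antisym)

lemma possibility_frame_carrier_mem:
  assumes "possibility_frame Om le Ev"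
  shows "Om \<in> Ev"
proof -
  have refl: "\<And>a. a \<in> Om \<Longrightarrow> le a a" using assms unfolding possibility_frame_def poset_def by blast
  obtain E where E: "E \<in> Ev" using assms unfolding possibility_frame_def by blast
  have "E \<inter> neg Om le E = {}" using refl by (auto simp: neg_def)
  then have "{} \<in> Ev" using assms E unfolding possibility_frame_def by metis
  moreover have "neg Om le {} = Om" by (auto simp: neg_def)
  ultimately show ?thesis using assms unfolding possibility_frame_def by metis
qed

lemma Aop_carrier:
  assumes "poset Om le" "\<forall>w\<in>Om. A w \<subseteq> Om"
  shows "Aop Om le A Om = Om"
proof -
  have refl: "\<And>a. a \<in> Om \<Longrightarrow> le a a"
    and antisym: "\<And>a b. a \<in> Om \<Longrightarrow> b \<in> Om \<Longrightarrow> le a b \<Longrightarrow> le b a \<Longrightarrow> a = b"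
    using assms(1) unfolding poset_def by blast+
  have neg_Om: "neg Om le Om = {}" using refl by (auto simp: neg_def)
  have maxs_down: "maxs le (Om \<inter> down Om le {v}) = {v}" if "v \<in> Om" for v
    using that refl antisym unfolding maxs_def down_def by auto
  have maxs_empty: "maxs le {} = {}" by (simp add: maxs_def)
  have "maxs le (Om \<inter> down Om le {v}) \<union> maxs le (neg Om le Om \<inter> down Om le {v}) \<subseteq> A w'"
    if "w' \<in> Om" "v \<in> A w'" for w' v
  proof -
    have "v \<in> Om" using that assms(2) by blast
    then show ?thesis using that by (simp add: neg_Om maxs_down maxs_empty)
  qed
  then show ?thesis unfolding Aop_def by blast
qed

lemma Aop_neg:
  assumes "poset Om le" "E \<in> RO Om le"
  shows "Aop Om le A (neg Om le E) = Aop Om le A E"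
  unfolding Aop_def neg_neg_RO[OF assms] by (simp add: Un_commute)

lemma maxs_Int_below_maxs:
  assumes "poset Om le" "quasi_principal Om le Ev" "E \<in> RO Om le"
    and "E \<inter> down Om le {v} \<in> Ev" "v \<in> Om"
    and x: "x \<in> maxs le (E \<inter> F \<inter> down Om le {v})"
  shows "\<exists>u\<in>maxs le (E \<inter> down Om le {v}). x \<in> maxs le (F \<inter> down Om le {u})"
proof -
  have trans: "\<And>a b c. a \<in> Om \<Longrightarrow> b \<in> Om \<Longrightarrow> c \<in> Om \<Longrightarrow> le a b \<Longrightarrow> le b c \<Longrightarrow> le a c"
    using assms(1) unfolding poset_def by blast
  have "x \<in> E \<inter> down Om le {v}" using x by (auto simp: maxs_def)
  then have "x \<in> down Om le (maxs le (E \<inter> down Om le {v}))"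
    using assms(2,4) unfolding quasi_principal_def by blast
  then obtain u where u: "u \<in> maxs le (E \<inter> down Om le {v})" "le x u"
    by (auto simp: down_def)
  then have u_below: "u \<in> E" "u \<in> Om" "le u v" by (auto simp: maxs_def down_def)
  have "F \<inter> down Om le {u} \<subseteq> E \<inter> F \<inter> down Om le {v}"
  proof
    fix y assume "y \<in> F \<inter> down Om le {u}"
    then have y: "y \<in> F" "y \<in> Om" "le y u" by (auto simp: down_def)
    have "y \<in> E" using RO_down_closed[OF assms(1,3) u_below(1) y(2,3)] .
    moreover have "le y v" using trans[OF y(2) u_below(2) assms(5) y(3) u_below(3)] .
    ultimately show "y \<in> E \<inter> F \<inter> down Om le {v}" using y by (auto simp: down_def)
  qed
  then have "x \<in> maxs le (F \<inter> down Om le {u})"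
    using x u(2) unfolding maxs_def down_def by blast
  then show ?thesis using u(1) by blast
qed

lemma awareness_frame_Aop_Int:
  assumes frame: "awareness_frame Om le Ev A"
    and E: "E \<in> Ev" "w \<in> Aop Om le A E" and F: "F \<in> Ev" "w \<in> Aop Om le A F"
  shows "w \<in> Aop Om le A (E \<inter> F)"
  unfolding Aop_def
proof (intro CollectI conjI ballI impI subsetI)
  have poset: "poset Om le" and Ev_RO: "Ev \<subseteq> RO Om le"
    and Ev_Int: "\<forall>E\<in>Ev. \<forall>F\<in>Ev. E \<inter> F \<in> Ev" and Ev_neg: "\<forall>E\<in>Ev. neg Om le E \<in> Ev"
    using frame by (auto simp: awareness_frame_def possibility_frame_def)
  have quasi: "quasi_principal Om le Ev" and A_carrier: "\<forall>w\<in>Om. A w \<subseteq> Om"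
    and A_down: "\<forall>w\<in>Om. \<forall>v\<in>A w. down Om le {v} \<in> Ev"
    and A_join: "\<forall>w\<in>Om. \<forall>v\<in>A w. \<forall>E\<in>Ev. \<forall>E'\<in>Ev.
        maxs le (E \<inter> down Om le {v}) \<union> maxs le (E' \<inter> down Om le {v}) \<subseteq> A w \<longrightarrow>
        maxs le (join Om le E E' \<inter> down Om le {v}) \<subseteq> A w"
    using frame by (simp_all add: awareness_frame_def)
  show "w \<in> Om" using E(2) by (simp add: Aop_def)
  fix w' v x assume w': "w' \<in> Om" "le w' w" and v: "v \<in> A w'"
  assume x: "x \<in> maxs le (E \<inter> F \<inter> down Om le {v}) \<union> maxs le (neg Om le (E \<inter> F) \<inter> down Om le {v})"
  have aware_E: "maxs le (E \<inter> down Om le {v}) \<union> maxs le (neg Om le E \<inter> down Om le {v}) \<subseteq> A w'"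
    using E(2) w' v unfolding Aop_def by blast
  have aware_F: "maxs le (F \<inter> down Om le {u}) \<union> maxs le (neg Om le F \<inter> down Om le {u}) \<subseteq> A w'"
    if "u \<in> A w'" for u
    using F(2) w' that unfolding Aop_def by blast
  show "x \<in> A w'"
  proof (cases "x \<in> maxs le (E \<inter> F \<inter> down Om le {v})")
    case True
    have "v \<in> Om" using A_carrier w'(1) v by blast
    moreover have "E \<inter> down Om le {v} \<in> Ev" using Ev_Int E(1) A_down w'(1) v by blast
    ultimately obtain u where "u \<in> maxs le (E \<inter> down Om le {v})" "x \<in> maxs le (F \<inter> down Om le {u})"
      using maxs_Int_below_maxs[OF poset quasi] Ev_RO E(1) True by blast
    then show ?thesis using aware_E aware_F by blast
  next
    case False
    have "maxs le (neg Om le E \<inter> down Om le {v}) \<union> maxs le (neg Om le F \<inter> down Om le {v}) \<subseteq> A w'"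
      using aware_E aware_F[OF v] by blast
    then have "maxs le (join Om le (neg Om le E) (neg Om le F) \<inter> down Om le {v}) \<subseteq> A w'"
      using A_join w'(1) v Ev_neg E(1) F(1) by blast
    moreover have "neg Om le (E \<inter> F) = join Om le (neg Om le E) (neg Om le F)"
      using neg_Int_RO[OF poset] Ev_RO E(1) F(1) by blast
    ultimately show ?thesis using False x by auto
  qed
qed

theorem corollary4p4:
  fixes Om :: "'w set" and le :: "'w \<Rightarrow> 'w \<Rightarrow> bool" and Ev :: "'w set set"
    and A K B :: "'w \<Rightarrow> 'w set" and w :: 'w
  assumes "epistemic_frame Om le Ev A K B"
    and "w \<in> Om"
  shows "Om \<in> {E\<in>Ev. w \<in> Aop Om le A E}
       \<and> (\<forall>E\<in>{E\<in>Ev. w \<in> Aop Om le A E}. \<forall>F\<in>{E\<in>Ev. w \<in> Aop Om le A E}.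
             E \<inter> F \<in> {E\<in>Ev. w \<in> Aop Om le A E})
       \<and> (\<forall>E\<in>{E\<in>Ev. w \<in> Aop Om le A E}. neg Om le E \<in> {E\<in>Ev. w \<in> Aop Om le A E})"
proof -
  have frame: "awareness_frame Om le Ev A" using assms(1) by (simp add: epistemic_frame_def)
  then have pframe: "possibility_frame Om le Ev" and A_carrier: "\<forall>w\<in>Om. A w \<subseteq> Om"
    by (simp_all add: awareness_frame_def)
  then have poset: "poset Om le" and Ev_RO: "Ev \<subseteq> RO Om le"
    and Ev_Int: "\<forall>E\<in>Ev. \<forall>F\<in>Ev. E \<inter> F \<in> Ev" and Ev_neg: "\<forall>E\<in>Ev. neg Om le E \<in> Ev"
    by (auto simp: possibility_frame_def)
  have "Om \<in> Ev" using possibility_frame_carrier_mem[OF pframe] .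
  moreover have "w \<in> Aop Om le A Om" using Aop_carrier[OF poset A_carrier] assms(2) by simp
  moreover have "E \<inter> F \<in> Ev \<and> w \<in> Aop Om le A (E \<inter> F)"
    if "E \<in> Ev" "w \<in> Aop Om le A E" "F \<in> Ev" "w \<in> Aop Om le A F" for E F
    using Ev_Int awareness_frame_Aop_Int[OF frame] that by blast
  moreover have "neg Om le E \<in> Ev \<and> w \<in> Aop Om le A (neg Om le E)"
    if "E \<in> Ev" "w \<in> Aop Om le A E" for E
    using Ev_neg Aop_neg[OF poset] Ev_RO that by blast
  ultimately show ?thesis by blast
qed

end
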